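(* Let $m\neq0$ and $r$ be real numbers. For all integers $n,k\ge0$, $$L_{m,r}(n,k)=\frac{1}{m^k\,k!}\sum_{j=0}^{k}\binom{k}{j}(-1)^{k-j}\prod_{i=0}^{n-1}(2r+jm+im),$$ and for all integers $n\ge k\ge1$, $$L_{m,r}(n,k)=\sum_{j=k}^{n}L_{m,r}(j-1,k-1)\prod_{i=j}^{n-1}(2r+km+im).$$
   Context: For real $m,r$, let $w_{m,r}(n,k)$ and $W_{m,r}(n,k)$ be the $r$-Whitney numbers of the first and second kind, defined by the polynomial identities $\prod_{j=0}^{n-1}(x-r-jm)=\sum_{k=0}^n w_{m,r}(n,k)x^k$ and $x^n=\sum_{k=0}^n W_{m,r}(n,k)\prod_{j=0}^{k-1}(x-r-jm)$ (both vanishing for $k>n$ or $k<0$; empty products equal $1$). The $r$-Whitney-Lah numbers are $L_{m,r}(n,k)=\sum_{j=k}^{n}(-1)^{n-j}w_{m,r}(n,j)W_{m,r}(j,k)$, with $L_{m,r}(n,k)=0$ for $n<k$ or $k<0$. *)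

theory Defs
  imports "HOL-Analysis.Analysis" "HOL-Computational_Algebra.Polynomial"
begin

definition gfall :: "real \<Rightarrow> real \<Rightarrow> nat \<Rightarrow> real poly" where
  "gfall m r n = (\<Prod>j<n. [:- r - real j * m, 1:])"

definition whitney1 :: "real \<Rightarrow> real \<Rightarrow> nat \<Rightarrow> nat \<Rightarrow> real" where
  "whitney1 m r n k = coeff (gfall m r n) k"

definition whitney2 :: "real \<Rightarrow> real \<Rightarrow> nat \<Rightarrow> nat \<Rightarrow> real" where
  "whitney2 m r n = (THE c. monom 1 n = (\<Sum>k\<le>n. smult (c k) (gfall m r k))
                              \<and> (\<forall>k>n. c k = 0))"

definition whitney_lah :: "real \<Rightarrow> real \<Rightarrow> nat \<Rightarrow> nat \<Rightarrow> real" where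
  "whitney_lah m r n k = (if n < k then 0 else
     (\<Sum>j=k..n. (-1) ^ (n - j) * whitney1 m r n j * whitney2 m r j k))"

end

(* Expanding the rising product (x + r)(x + r + m)...(x + r + (n-1)m) first in powers of x
   (first kind, with alternating signs) and then each power in the generalized falling factorials
   g_k(x) = (x - r)(x - r - m)...(x - r - (k-1)m) (second kind) shows that the Whitney-Lah
   numbers L(n,k) are its coordinates in the basis g_k. For m \<noteq> 0 these coordinates are
   unique, since g_k vanishes at r + jm for j < k but not at r + km. Multiplying by
   x + r + nm = (x - r - km) + (2r + km + nm) gives the triangular recurrence
   L(n+1,k) = L(n,k-1) + (2r + km + nm) L(n,k); unrolling it along a column is the second
   identity, and the k-th finite difference in j of the product of (2r + jm + im) over i < n
   satisfies the same recurrence up to the factor m^k k!. *)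
theory Submission
  imports Defs
begin

lemma poly_gfall: "poly (gfall m r n) x = (\<Prod>j<n. x - r - real j * m)"
  by (simp add: gfall_def poly_prod algebra_simps)

lemma degree_gfall: "degree (gfall m r n) \<le> n"
proof -
  have "degree (gfall m r n) \<le> (\<Sum>j<n. degree [:- r - real j * m, 1:])"
    unfolding gfall_def using degree_prod_sum_le[of "{..<n}" "\<lambda>j. [:- r - real j * m, 1:]"]
    by (simp add: o_def)
  then show ?thesis by simp
qed

lemma gfall_combination_eq_0:
  assumes m: "m \<noteq> 0" and zero: "\<And>x. (\<Sum>k\<le>N. e k * poly (gfall m r k) x) = 0"
  shows "k \<le> N \<Longrightarrow> e k = 0"
proof (induction k rule: less_induct)
  case (less k)
  define x where "x = r + real k * m"
  have others: "e i * poly (gfall m r i) x = 0" if "i \<in> {..N} - {k}" for i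
  proof (cases "i < k")
    case True then show ?thesis using less that by simp
  next
    case False
    then have "k \<in> {..<i}" using that by auto
    then show ?thesis by (auto simp: poly_gfall x_def intro!: prod_zero)
  qed
  then have "(\<Sum>i\<le>N. e i * poly (gfall m r i) x) = e k * poly (gfall m r k) x"
    using less.prems others by (simp add: sum.remove sum.neutral)
  moreover have "poly (gfall m r k) x \<noteq> 0"
    using m by (auto simp: poly_gfall x_def algebra_simps)
  ultimately show ?case using zero[of x] by simp
qed

text \<open>Coordinates of \<open>\<Prod>j<n. x + c j\<close> in the basis \<open>gfall m r k\<close>: the second-kind
  numbers are the case \<open>c = 0\<close>, the Whitney-Lah numbers the case \<open>c j = r + j m\<close>.\<close>
fun gfall_connection :: "real \<Rightarrow> real \<Rightarrow> (nat \<Rightarrow> real) \<Rightarrow> nat \<Rightarrow> nat \<Rightarrow> real" where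
  "gfall_connection m r c 0 k = (if k = 0 then 1 else 0)"
| "gfall_connection m r c (Suc n) k =
     (if k = 0 then 0 else gfall_connection m r c n (k - 1))
     + (r + real k * m + c n) * gfall_connection m r c n k"

lemma gfall_connection_eq_0: "n < k \<Longrightarrow> gfall_connection m r c n k = 0"
  by (induction n arbitrary: k) auto

lemma gfall_connection_diag: "gfall_connection m r c n n = 1"
  by (induction n) (auto simp: gfall_connection_eq_0)

lemma sum_atMost_Suc_shift_down:
  fixes f g :: "nat \<Rightarrow> 'a::semiring_0"
  shows "(\<Sum>k\<le>Suc n. (if k = 0 then 0 else f (k - 1)) * g k) = (\<Sum>k\<le>n. f k * g (Suc k))"
  by (subst sum.atMost_Suc_shift) simp

lemma prod_eq_sum_gfall_connection:
  "(\<Prod>j<n. x + c j) = (\<Sum>k\<le>n. gfall_connection m r c n k * poly (gfall m r k) x)"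
proof (induction n)
  case 0 then show ?case by (simp add: gfall_def)
next
  case (Suc n)
  let ?T = "gfall_connection m r c n" and ?g = "\<lambda>k. poly (gfall m r k) x"
  have g_Suc: "?g (Suc k) = ?g k * (x - r - real k * m)" for k
    by (simp add: poly_gfall)
  have "(\<Prod>j<Suc n. x + c j) = (\<Sum>k\<le>n. ?T k * ?g k) * (x + c n)"
    by (simp add: Suc)
  also have "\<dots> = (\<Sum>k\<le>n. ?T k * ?g (Suc k)) + (\<Sum>k\<le>n. (r + real k * m + c n) * ?T k * ?g k)"
    by (simp add: g_Suc sum_distrib_left sum_distrib_right sum.distrib[symmetric] algebra_simps)
  also have "(\<Sum>k\<le>n. (r + real k * m + c n) * ?T k * ?g k)
      = (\<Sum>k\<le>Suc n. (r + real k * m + c n) * ?T k * ?g k)"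
    by (simp add: gfall_connection_eq_0)
  also have "(\<Sum>k\<le>n. ?T k * ?g (Suc k)) = (\<Sum>k\<le>Suc n. (if k = 0 then 0 else ?T (k - 1)) * ?g k)"
    by (rule sum_atMost_Suc_shift_down[symmetric])
  finally show ?case by (simp add: sum.distrib[symmetric] algebra_simps)
qed

lemma gfall_connection_column:
  assumes "1 \<le> k" "k \<le> n"
  shows "gfall_connection m r c n k =
    (\<Sum>j=k..n. gfall_connection m r c (j - 1) (k - 1) * (\<Prod>i=j..<n. r + real k * m + c i))"
  using assms(2)
proof (induction n rule: dec_induct)
  case base
  then show ?case using assms(1) by (simp add: gfall_connection_diag)
next
  case (step n)
  let ?T = "gfall_connection m r c" and ?a = "\<lambda>i. r + real k * m + c i"
  have "(\<Sum>j=k..Suc n. ?T (j - 1) (k - 1) * (\<Prod>i=j..<Suc n. ?a i))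
      = (\<Sum>j=k..n. ?T (j - 1) (k - 1) * (\<Prod>i=j..<n. ?a i)) * ?a n + ?T n (k - 1)"
    using step(1) by (simp add: sum_distrib_right mult.assoc)
  also have "\<dots> = ?T (Suc n) k"
    using step assms(1) by (cases k) (auto simp: algebra_simps)
  finally show ?case ..
qed

lemma gfall_coordinates_unique:
  assumes "m \<noteq> 0"
    and "\<And>x. (\<Sum>k\<le>N. a k * poly (gfall m r k) x) = (\<Sum>k\<le>N. b k * poly (gfall m r k) x)"
    and "k \<le> N"
  shows "a k = b k"
proof -
  have "\<And>x. (\<Sum>k\<le>N. (a k - b k) * poly (gfall m r k) x) = 0"
    using assms(2) by (simp add: algebra_simps sum_subtractf)
  from gfall_combination_eq_0[OF assms(1) this assms(3)] show ?thesis by simp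
qed

lemma whitney2_eq_gfall_connection:
  assumes "m \<noteq> 0"
  shows "whitney2 m r n = gfall_connection m r (\<lambda>_. 0) n"
  unfolding whitney2_def
proof (rule the_equality)
  let ?T = "gfall_connection m r (\<lambda>_. 0) n"
  have "x ^ n = (\<Sum>k\<le>n. ?T k * poly (gfall m r k) x)" for x
    using prod_eq_sum_gfall_connection[where c="\<lambda>_. 0"] by simp
  then show "monom 1 n = (\<Sum>k\<le>n. smult (?T k) (gfall m r k)) \<and> (\<forall>k>n. ?T k = 0)"
    by (auto simp: gfall_connection_eq_0 poly_eq_poly_eq_iff[symmetric] poly_sum poly_monom)
next
  fix c assume c: "monom 1 n = (\<Sum>k\<le>n. smult (c k) (gfall m r k)) \<and> (\<forall>k>n. c k = 0)"
  let ?T = "gfall_connection m r (\<lambda>_. 0) n"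
  have same: "(\<Sum>k\<le>n. c k * poly (gfall m r k) x) = (\<Sum>k\<le>n. ?T k * poly (gfall m r k) x)" for x
    using arg_cong[OF conjunct1[OF c], of "\<lambda>p. poly p x"]
      prod_eq_sum_gfall_connection[where c="\<lambda>_. 0"]
    by (simp add: poly_sum poly_monom)
  show "c = ?T"
  proof
    fix k
    show "c k = ?T k"
      using gfall_coordinates_unique[OF assms same] c gfall_connection_eq_0[of n k]
      by (cases "k \<le> n") auto
  qed
qed

lemma alternating_sum_whitney1:
  "(\<Sum>j\<le>n. (-1) ^ (n - j) * whitney1 m r n j * x ^ j) = (\<Prod>j<n. x + r + real j * m)"
proof -
  have "(\<Sum>j\<le>n. (-1) ^ (n - j) * whitney1 m r n j * x ^ j)
      = (-1) ^ n * (\<Sum>j\<le>n. coeff (gfall m r n) j * (-x) ^ j)"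
    unfolding whitney1_def sum_distrib_left
  proof (rule sum.cong)
    fix j assume "j \<in> {..n}"
    then have "(-1::real) ^ n = (-1) ^ (n - j) * (-1) ^ j" by (simp flip: power_add)
    then show "(-1) ^ (n - j) * coeff (gfall m r n) j * x ^ j
        = (-1) ^ n * (coeff (gfall m r n) j * (- x) ^ j)"
      by (simp add: power_minus[of x])
  qed simp
  also have "\<dots> = (-1) ^ n * poly (gfall m r n) (-x)"
    by (subst (2) poly_as_sum_of_monoms'[OF degree_gfall, symmetric]) (simp add: poly_sum poly_monom)
  also have "\<dots> = (\<Prod>j<n. (-1::real)) * (\<Prod>j<n. - x - r - real j * m)"
    by (simp add: poly_gfall)
  also have "\<dots> = (\<Prod>j<n. (-1) * (- x - r - real j * m))"
    by (rule prod.distrib[symmetric])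
  finally show ?thesis by (simp add: algebra_simps)
qed

lemma prod_eq_sum_whitney_lah:
  assumes "m \<noteq> 0"
  shows "(\<Prod>j<n. x + r + real j * m) = (\<Sum>k\<le>n. whitney_lah m r n k * poly (gfall m r k) x)"
proof -
  let ?w = "\<lambda>j. (-1) ^ (n - j) * whitney1 m r n j" and ?W = "gfall_connection m r (\<lambda>_. 0)"
  have lah: "whitney_lah m r n k = (\<Sum>j\<le>n. ?w j * ?W j k)" if "k \<le> n" for k
    unfolding whitney_lah_def whitney2_eq_gfall_connection[OF assms] using that
    by (simp, intro sum.mono_neutral_left) (auto simp: gfall_connection_eq_0)
  have "(\<Sum>k\<le>n. whitney_lah m r n k * poly (gfall m r k) x)
      = (\<Sum>j\<le>n. ?w j * (\<Sum>k\<le>n. ?W j k * poly (gfall m r k) x))"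
    by (simp add: lah sum_distrib_left sum_distrib_right mult.assoc) (rule sum.swap)
  also have "\<dots> = (\<Sum>j\<le>n. ?w j * x ^ j)"
  proof (rule sum.cong)
    fix j assume "j \<in> {..n}"
    then have "(\<Sum>k\<le>n. ?W j k * poly (gfall m r k) x) = (\<Sum>k\<le>j. ?W j k * poly (gfall m r k) x)"
      by (intro sum.mono_neutral_right) (auto simp: gfall_connection_eq_0)
    then show "?w j * (\<Sum>k\<le>n. ?W j k * poly (gfall m r k) x) = ?w j * x ^ j"
      using prod_eq_sum_gfall_connection[where c="\<lambda>_. 0"] by simp
  qed simp
  finally show ?thesis by (simp add: alternating_sum_whitney1)
qed

lemma whitney_lah_eq_gfall_connection:
  assumes "m \<noteq> 0"
  shows "whitney_lah m r n k = gfall_connection m r (\<lambda>j. r + real j * m) n k"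
proof (cases "k \<le> n")
  case True
  have "(\<Sum>k\<le>n. whitney_lah m r n k * poly (gfall m r k) x)
      = (\<Sum>k\<le>n. gfall_connection m r (\<lambda>j. r + real j * m) n k * poly (gfall m r k) x)" for x
    unfolding prod_eq_sum_whitney_lah[OF assms, symmetric]
    by (simp add: prod_eq_sum_gfall_connection[symmetric] add.assoc)
  from gfall_coordinates_unique[OF assms this True] show ?thesis .
next
  case False then show ?thesis by (simp add: whitney_lah_def gfall_connection_eq_0)
qed

definition lah_difference :: "real \<Rightarrow> real \<Rightarrow> nat \<Rightarrow> nat \<Rightarrow> real" where
  "lah_difference m r n k =
     (\<Sum>j\<le>k. real (k choose j) * (-1) ^ (k - j) * (\<Prod>i<n. 2 * r + real j * m + real i * m))"

lemma lah_difference_0: "lah_difference m r 0 k = (if k = 0 then 1 else 0)"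
  using binomial_ring[of "1::real" "-1" k] by (auto simp: lah_difference_def power_0_left)

lemma lah_difference_Suc:
  "lah_difference m r (Suc n) (Suc k) =
     (2 * r + real (Suc k) * m + real n * m) * lah_difference m r n (Suc k)
     + m * real (Suc k) * lah_difference m r n k"
proof -
  define c where "c = 2 * r + real (Suc k) * m + real n * m"
  define P where "P j = (\<Prod>i<n. 2 * r + real j * m + real i * m)" for j
  have term_Suc: "real (Suc k choose j) * (-1) ^ (Suc k - j) * (P j * (2 * r + real j * m + real n * m))
      = c * (real (Suc k choose j) * (-1) ^ (Suc k - j) * P j)
        + m * real (Suc k) * (real (k choose j) * (-1) ^ (k - j) * P j)"
    if "j \<le> Suc k" for j
  proof (cases "j = Suc k")
    case True then show ?thesis by (simp add: c_def)
  next
    case False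
    then have "j \<le> k" using that by simp
    then have shift: "2 * r + real j * m + real n * m = c - real (Suc k - j) * m"
      and sign: "(-1::real) ^ (Suc k - j) = - ((-1) ^ (k - j))"
      by (simp_all add: c_def of_nat_diff Suc_diff_le algebra_simps)
    have "real (Suc k choose j) * (-1) ^ (Suc k - j) * (P j * (2 * r + real j * m + real n * m))
        = c * (real (Suc k choose j) * (-1) ^ (Suc k - j) * P j)
          + m * (real (Suc k - j) * real (Suc k choose j)) * ((-1) ^ (k - j) * P j)"
      unfolding shift sign by (simp add: algebra_simps)
    also have "real (Suc k - j) * real (Suc k choose j) = real (Suc k) * real (k choose j)"
      using binomial_absorb_comp[of "Suc k" j] by (metis diff_Suc_1 of_nat_mult)
    finally show ?thesis by (simp add: algebra_simps)
  qed
  have "lah_difference m r (Suc n) (Suc k)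
      = (\<Sum>j\<le>Suc k. real (Suc k choose j) * (-1) ^ (Suc k - j) * (P j * (2 * r + real j * m + real n * m)))"
    by (simp add: lah_difference_def P_def)
  also have "\<dots> = c * (\<Sum>j\<le>Suc k. real (Suc k choose j) * (-1) ^ (Suc k - j) * P j)
      + m * real (Suc k) * (\<Sum>j\<le>Suc k. real (k choose j) * (-1) ^ (k - j) * P j)"
    unfolding sum_distrib_left sum.distrib[symmetric] by (rule sum.cong) (simp_all add: term_Suc)
  also have "\<dots> = c * lah_difference m r n (Suc k) + m * real (Suc k) * lah_difference m r n k"
    by (simp add: lah_difference_def P_def)
  finally show ?thesis by (simp add: c_def)
qed

lemma lah_difference_eq:
  "lah_difference m r n k = m ^ k * fact k * gfall_connection m r (\<lambda>j. r + real j * m) n k"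
proof (induction n arbitrary: k)
  case 0 then show ?case by (simp add: lah_difference_0)
next
  case (Suc n)
  show ?case
  proof (cases k)
    case 0
    then show ?thesis using Suc.IH[of 0] by (simp add: lah_difference_def)
  next
    case (Suc k')
    then show ?thesis using Suc.IH by (simp add: lah_difference_Suc algebra_simps)
  qed
qed

theorem mainTheorem12:
  fixes m r :: real
  assumes "m \<noteq> 0"
  shows "(\<forall>n k. whitney_lah m r n k =
            1 / (m ^ k * fact k) *
            (\<Sum>j=0..k. real (k choose j) * (-1) ^ (k - j) *
               (\<Prod>i=0..<n. 2 * r + real j * m + real i * m)))
       \<and> (\<forall>n k. 1 \<le> k \<and> k \<le> n \<longrightarrow>
            whitney_lah m r n k =
            (\<Sum>j=k..n. whitney_lah m r (j - 1) (k - 1) *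
               (\<Prod>i=j..<n. 2 * r + real k * m + real i * m)))"
proof (intro conjI allI impI)
  fix n k :: nat
  show "whitney_lah m r n k =
      1 / (m ^ k * fact k) *
      (\<Sum>j=0..k. real (k choose j) * (-1) ^ (k - j) * (\<Prod>i=0..<n. 2 * r + real j * m + real i * m))"
    using assms lah_difference_eq[of m r n k]
    by (simp add: whitney_lah_eq_gfall_connection lah_difference_def atLeast0AtMost atLeast0LessThan)
next
  fix n k :: nat
  assume "1 \<le> k \<and> k \<le> n"
  then show "whitney_lah m r n k =
      (\<Sum>j=k..n. whitney_lah m r (j - 1) (k - 1) * (\<Prod>i=j..<n. 2 * r + real k * m + real i * m))"
    using gfall_connection_column[where c="\<lambda>j. r + real j * m"]
    by (simp add: whitney_lah_eq_gfall_connection[OF assms] add_ac)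
qed

end
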